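(* For every $\varepsilon\in(0,1]$ there exists $b_0$ such that for every $b\geq b_0$ there exists $n_0$ such that for every $n\geq n_0$ the following holds. Let $G$ be an $(n,\varepsilon)$-digraph and $A\subseteq V(G)$ with $|A|\leq\frac n{\log^2n}$. Then there is a $b$-normal perfect fractional matching $\mathbf{z}$ of $G-A$ with $h(\mathbf{z})\geq h(G)-\varepsilon n$.
   Context: $\log=\log_2$. Digraphs have no loops and at most one edge from $v$ to $w$ per ordered pair. An $(n,\varepsilon)$-digraph is a digraph on $n$ vertices with every in- and out-degree at least $(\frac12+\varepsilon)n$. A perfect fractional matching of a digraph $H$ is $\mathbf{x}\colon E(H)\to\mathbb{R}_{\geq0}$ with $\sum_{w\in N^+(v)}\mathbf{x}_{vw}=1=\sum_{w\in N^-(v)}\mathbf{x}_{wv}$ for all $v$; it is $b$-normal if $\frac1{b|V(H)|}\leq\mathbf{x}_e\leq\frac b{|V(H)|}$ for all edges $e$. $h(\mathbf{x})=\sum_e\mathbf{x}_e\log\frac1{\mathbf{x}_e}$ and $h(G)$ is the maximum of $h(\mathbf{x})$ over perfect fractional matchings $\mathbf{x}$ of $G$. $G-A$ is the subdigraph induced by $V(G)\setminus A$. *)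

theory Defs
  imports "HOL-Analysis.Analysis"
begin

definition digraph :: "'a set \<Rightarrow> ('a \<times> 'a) set \<Rightarrow> bool" where
  "digraph V E \<longleftrightarrow> finite V \<and> E \<subseteq> V \<times> V \<and> (\<forall>v. (v, v) \<notin> E)"

definition out_nbrs :: "('a \<times> 'a) set \<Rightarrow> 'a \<Rightarrow> 'a set" where
  "out_nbrs E v = {w. (v, w) \<in> E}"

definition in_nbrs :: "('a \<times> 'a) set \<Rightarrow> 'a \<Rightarrow> 'a set" where
  "in_nbrs E v = {w. (w, v) \<in> E}"

definition n_eps_digraph :: "nat \<Rightarrow> real \<Rightarrow> 'a set \<Rightarrow> ('a \<times> 'a) set \<Rightarrow> bool" where
  "n_eps_digraph n eps V E \<longleftrightarrow> digraph V E \<and> card V = n \<and>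
     (\<forall>v\<in>V. real (card (out_nbrs E v)) \<ge> (1/2 + eps) * real n \<and>
             real (card (in_nbrs E v)) \<ge> (1/2 + eps) * real n)"

definition del_vertices_E :: "'a set \<Rightarrow> ('a \<times> 'a) set \<Rightarrow> 'a set \<Rightarrow> ('a \<times> 'a) set" where
  "del_vertices_E V E A = E \<inter> ((V - A) \<times> (V - A))"

text \<open>Perfect fractional matching: a nonnegative weighting of the edges (values off E are
  irrelevant, we require them to be 0) with all out-sums and in-sums equal to 1.\<close>
definition perfect_frac_matching :: "'a set \<Rightarrow> ('a \<times> 'a) set \<Rightarrow> ('a \<times> 'a \<Rightarrow> real) \<Rightarrow> bool" where
  "perfect_frac_matching V E x \<longleftrightarrow>
     (\<forall>e\<in>E. x e \<ge> 0) \<and> (\<forall>e. e \<notin> E \<longrightarrow> x e = 0) \<and>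
     (\<forall>v\<in>V. (\<Sum>w\<in>out_nbrs E v. x (v, w)) = 1 \<and> (\<Sum>w\<in>in_nbrs E v. x (w, v)) = 1)"

definition b_normal :: "real \<Rightarrow> 'a set \<Rightarrow> ('a \<times> 'a) set \<Rightarrow> ('a \<times> 'a \<Rightarrow> real) \<Rightarrow> bool" where
  "b_normal b V E x \<longleftrightarrow>
     (\<forall>e\<in>E. 1 / (b * real (card V)) \<le> x e \<and> x e \<le> b / real (card V))"

definition entropy :: "('a \<times> 'a) set \<Rightarrow> ('a \<times> 'a \<Rightarrow> real) \<Rightarrow> real" where
  "entropy E x = (\<Sum>e\<in>E. if x e = 0 then 0 else x e * log 2 (1 / x e))"

text \<open>h(G): the maximum of h over perfect fractional matchings (taken as a supremum).\<close>
definition h_digraph :: "'a set \<Rightarrow> ('a \<times> 'a) set \<Rightarrow> real" where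
  "h_digraph V E = Sup (entropy E ` {x. perfect_frac_matching V E x})"

end

theory Submission
  imports Defs "HOL-Real_Asymp.Real_Asymp"
begin

(*
  If all in- and out-degrees of a digraph on W are at least \<delta> |W| with \<delta> > 1/2, matrix scaling
  yields a perfect fractional matching of product form z(v, w) = \<rho> v * \<sigma> w in which \<sigma> varies
  by a factor of at most R = \<delta> / (2 \<delta> - 1). Take \<rho> minimising scaling_potential over the
  normalised R-balanced vectors: one Sinkhorn step (rescale columns, then rows) keeps R-balance
  and does not increase the potential, so the minimiser is a fixed point, which says exactly that
  z is a perfect fractional matching. The ratio bound keeps every product \<rho> v * \<sigma> w within a
  constant factor of 1 / |W|.

  Deleting A lowers every degree by at most |A| \<le> \<epsilon> n / 2, so G - A satisfies the degree
  condition with \<epsilon> / 2, and its product matching z is b-normal for all b \<ge> 1 / \<epsilon>. Gibbs' inequality against the product weights, extended to A by their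
  values at one surviving vertex, bounds the entropy of every perfect fractional matching of G by
  h(z) + |A| (log n + O(1)), where the constant depends on \<epsilon> only; this loss is below \<epsilon> n
  once |A| \<le> n / log\<^sup>2 n and n is large.
*)

section \<open>Edge sums\<close>

lemma out_nbrs_subset: "E \<subseteq> V \<times> V \<Longrightarrow> out_nbrs E v \<subseteq> V"
  by (auto simp: out_nbrs_def)

lemma in_nbrs_subset: "E \<subseteq> V \<times> V \<Longrightarrow> in_nbrs E v \<subseteq> V"
  by (auto simp: in_nbrs_def)

lemma finite_out_nbrs: "finite V \<Longrightarrow> E \<subseteq> V \<times> V \<Longrightarrow> finite (out_nbrs E v)"
  by (rule finite_subset[OF out_nbrs_subset])

lemma finite_in_nbrs: "finite V \<Longrightarrow> E \<subseteq> V \<times> V \<Longrightarrow> finite (in_nbrs E v)"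
  by (rule finite_subset[OF in_nbrs_subset])

lemma sum_edges_out:
  assumes "finite V" and "E \<subseteq> V \<times> V"
  shows "(\<Sum>e\<in>E. f e) = (\<Sum>v\<in>V. \<Sum>w\<in>out_nbrs E v. f (v, w))"
proof -
  have "E = Sigma V (out_nbrs E)"
    using assms(2) by (auto simp: out_nbrs_def)
  moreover have "\<forall>v\<in>V. finite (out_nbrs E v)"
    using assms by (simp add: finite_out_nbrs)
  ultimately show ?thesis
    using sum.Sigma[OF assms(1), of "out_nbrs E" "\<lambda>v w. f (v, w)"] by (simp add: case_prod_beta')
qed

lemma sum_edges_in:
  assumes "finite V" and "E \<subseteq> V \<times> V"
  shows "(\<Sum>e\<in>E. f e) = (\<Sum>w\<in>V. \<Sum>v\<in>in_nbrs E w. f (v, w))"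
proof -
  have "out_nbrs E v = {w. w \<in> V \<and> (v, w) \<in> E}" "in_nbrs E w = {v. v \<in> V \<and> (v, w) \<in> E}"
    for v w using assms(2) by (auto simp: out_nbrs_def in_nbrs_def)
  moreover have "(\<Sum>v\<in>V. \<Sum>w | w \<in> V \<and> (v, w) \<in> E. f (v, w))
      = (\<Sum>w\<in>V. \<Sum>v | v \<in> V \<and> (v, w) \<in> E. f (v, w))"
    by (rule sum.swap_restrict[OF assms(1) assms(1)])
  ultimately show ?thesis
    by (simp add: sum_edges_out[OF assms])
qed

lemma sum_in_nbrs_swap:
  fixes f g :: "'a \<Rightarrow> real"
  assumes "finite W" and "F \<subseteq> W \<times> W"
  shows "(\<Sum>w\<in>W. g w * (\<Sum>v\<in>in_nbrs F w. f v)) = (\<Sum>v\<in>W. f v * (\<Sum>w\<in>out_nbrs F v. g w))"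
proof -
  have "(\<Sum>w\<in>W. g w * (\<Sum>v\<in>in_nbrs F w. f v)) = (\<Sum>e\<in>F. f (fst e) * g (snd e))"
    unfolding sum_edges_in[OF assms] by (simp add: sum_distrib_left mult.commute)
  also have "\<dots> = (\<Sum>v\<in>W. f v * (\<Sum>w\<in>out_nbrs F v. g w))"
    by (simp add: sum_edges_out[OF assms] sum_distrib_left)
  finally show ?thesis .
qed

lemma perfect_frac_matching_sum_fst:
  assumes "finite V" and "E \<subseteq> V \<times> V" and "perfect_frac_matching V E x"
  shows "(\<Sum>e\<in>E. x e * g (fst e)) = (\<Sum>v\<in>V. g v)"
  using assms(3) by (simp add: sum_edges_out[OF assms(1,2)] perfect_frac_matching_def
      flip: sum_distrib_right)

lemma perfect_frac_matching_sum_snd: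
  assumes "finite V" and "E \<subseteq> V \<times> V" and "perfect_frac_matching V E x"
  shows "(\<Sum>e\<in>E. x e * g (snd e)) = (\<Sum>v\<in>V. g v)"
  using assms(3) by (simp add: sum_edges_in[OF assms(1,2)] perfect_frac_matching_def
      flip: sum_distrib_right)

lemma perfect_frac_matching_sum:
  assumes "finite V" and "E \<subseteq> V \<times> V" and "perfect_frac_matching V E x"
  shows "(\<Sum>e\<in>E. x e) = real (card V)"
  using perfect_frac_matching_sum_fst[OF assms, of "\<lambda>_. 1"] by simp

section \<open>Gibbs' inequality\<close>

definition product_weight :: "('a \<times> 'a) set \<Rightarrow> ('a \<Rightarrow> real) \<Rightarrow> ('a \<Rightarrow> real) \<Rightarrow> 'a \<times> 'a \<Rightarrow> real" where
  "product_weight F \<rho> \<sigma> e = (if e \<in> F then \<rho> (fst e) * \<sigma> (snd e) else 0)"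

lemma entropy_term_le:
  fixes x q :: real
  assumes "0 \<le> x" and "0 < q"
  shows "(if x = 0 then 0 else x * log 2 (1 / x)) \<le> - x * log 2 q + (q - x) / ln 2"
proof (cases "x = 0")
  case True
  then show ?thesis using assms by simp
next
  case False
  with assms have x: "0 < x" by simp
  have "x * ln (q / x) \<le> x * (q / x - 1)"
    using x assms by (intro mult_left_mono ln_le_minus_one) auto
  also have "\<dots> = q - x" using x by (simp add: field_simps)
  finally have "x * ln (q / x) / ln 2 \<le> (q - x) / ln 2"
    by (simp add: divide_right_mono)
  moreover have "x * log 2 (1 / x) + x * log 2 q = x * ln (q / x) / ln 2"
    using x assms by (simp add: log_def ln_div field_simps)
  ultimately show ?thesis using False by simp
qed

lemma entropy_le_product:
  assumes "finite V" and EV: "E \<subseteq> V \<times> V" and x: "perfect_frac_matching V E x"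
    and pos: "\<forall>v\<in>V. 0 < r v \<and> 0 < s v"
  shows "entropy E x \<le> - (\<Sum>v\<in>V. log 2 (r v)) - (\<Sum>v\<in>V. log 2 (s v))
           + ((\<Sum>e\<in>E. r (fst e) * s (snd e)) - real (card V)) / ln 2"
proof -
  have "entropy E x \<le> (\<Sum>e\<in>E. - (x e * log 2 (r (fst e))) - x e * log 2 (s (snd e))
                          + (r (fst e) * s (snd e) - x e) / ln 2)"
    unfolding entropy_def
  proof (rule sum_mono)
    fix e assume e: "e \<in> E"
    then have "0 < r (fst e)" "0 < s (snd e)" using pos EV by auto
    moreover have "0 \<le> x e" using x e by (simp add: perfect_frac_matching_def)
    ultimately show "(if x e = 0 then 0 else x e * log 2 (1 / x e))
        \<le> - (x e * log 2 (r (fst e))) - x e * log 2 (s (snd e)) + (r (fst e) * s (snd e) - x e) / ln 2"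
      using entropy_term_le[of "x e" "r (fst e) * s (snd e)"] by (simp add: log_mult_pos algebra_simps)
  qed
  also have "\<dots> = - (\<Sum>e\<in>E. x e * log 2 (r (fst e))) - (\<Sum>e\<in>E. x e * log 2 (s (snd e)))
                 + ((\<Sum>e\<in>E. r (fst e) * s (snd e)) - (\<Sum>e\<in>E. x e)) / ln 2"
    by (simp add: sum.distrib sum_subtractf sum_negf flip: sum_divide_distrib)
  finally show ?thesis
    by (simp add: perfect_frac_matching_sum_fst[OF assms(1-3), where g = "\<lambda>v. log 2 (r v)"]
        perfect_frac_matching_sum_snd[OF assms(1-3), where g = "\<lambda>v. log 2 (s v)"]
        perfect_frac_matching_sum[OF assms(1-3)])
qed

lemma entropy_product_weight:
  assumes "finite W" and FW: "F \<subseteq> W \<times> W" and pos: "\<forall>v\<in>W. 0 < \<rho> v \<and> 0 < \<sigma> v"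
    and z: "perfect_frac_matching W F (product_weight F \<rho> \<sigma>)"
  shows "entropy F (product_weight F \<rho> \<sigma>) = - (\<Sum>v\<in>W. log 2 (\<rho> v)) - (\<Sum>v\<in>W. log 2 (\<sigma> v))"
proof -
  let ?z = "product_weight F \<rho> \<sigma>"
  have "entropy F ?z = (\<Sum>e\<in>F. - (?z e * log 2 (\<rho> (fst e))) - ?z e * log 2 (\<sigma> (snd e)))"
    unfolding entropy_def
  proof (rule sum.cong)
    fix e assume "e \<in> F"
    moreover from this have "0 < \<rho> (fst e)" "0 < \<sigma> (snd e)" using pos FW by auto
    ultimately show "(if ?z e = 0 then 0 else ?z e * log 2 (1 / ?z e))
        = - (?z e * log 2 (\<rho> (fst e))) - ?z e * log 2 (\<sigma> (snd e))"
      by (simp add: product_weight_def log_divide_pos log_mult_pos algebra_simps)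
  qed simp
  then show ?thesis
    by (simp add: sum_subtractf sum_negf
        perfect_frac_matching_sum_fst[OF assms(1,2) z, where g = "\<lambda>v. log 2 (\<rho> v)"]
        perfect_frac_matching_sum_snd[OF assms(1,2) z, where g = "\<lambda>v. log 2 (\<sigma> v)"])
qed

section \<open>Matrix scaling\<close>

definition ratio_bounded :: "real \<Rightarrow> 'a set \<Rightarrow> ('a \<Rightarrow> real) \<Rightarrow> bool" where
  "ratio_bounded R W f \<longleftrightarrow> (\<forall>v\<in>W. \<forall>v'\<in>W. f v \<le> R * f v')"

lemma ratio_bounded_mult_left:
  assumes "0 \<le> c" and "ratio_bounded R W f"
  shows "ratio_bounded R W (\<lambda>w. c * f w)"
  using assms by (auto simp: ratio_bounded_def) (metis mult_left_mono mult.left_commute)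

lemma ratio_bounded_sum_eq_one:
  fixes f :: "'a \<Rightarrow> real"
  assumes NW: "N \<subseteq> W" and rat: "ratio_bounded R W f" and w: "w \<in> W" and sum: "(\<Sum>w'\<in>N. f w') = 1"
  shows "card N * f w \<le> R" and "1 \<le> card N * (R * f w)"
proof -
  have "card N * f w = (\<Sum>w'\<in>N. f w)" by simp
  also have "\<dots> \<le> (\<Sum>w'\<in>N. R * f w')"
    using NW rat w by (intro sum_mono) (auto simp: ratio_bounded_def)
  also have "\<dots> = R" using sum by (simp flip: sum_distrib_left)
  finally show "card N * f w \<le> R" .
  have "1 = (\<Sum>w'\<in>N. f w')" using sum by simp
  also have "\<dots> \<le> (\<Sum>w'\<in>N. R * f w)"
    using NW rat w by (intro sum_mono) (auto simp: ratio_bounded_def)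
  also have "\<dots> = card N * (R * f w)" by simp
  finally show "1 \<le> card N * (R * f w)" .
qed

lemma sum_ratio_bounded_le:
  fixes f :: "'a \<Rightarrow> real"
  assumes fin: "finite W" and SW: "S \<subseteq> W" and nonneg: "\<forall>v\<in>W. 0 \<le> f v"
    and rat: "ratio_bounded R W f" and R: "0 \<le> R" and card: "\<delta> * real (card W) \<le> real (card S)"
  shows "\<delta> * sum f W \<le> (\<delta> + R * (1 - \<delta>)) * sum f S"
proof (cases "W = {}")
  case False
  let ?m = "real (card W)" and ?PS = "sum f S" and ?Pc = "sum f (W - S)"
  have Pc: "0 \<le> ?Pc" and PS: "0 \<le> ?PS" using nonneg SW by (auto intro: sum_nonneg)
  have "real (card S) * ?Pc = (\<Sum>s\<in>S. \<Sum>c\<in>W - S. f c)" by simp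
  also have "\<dots> \<le> (\<Sum>s\<in>S. \<Sum>c\<in>W - S. R * f s)"
    using rat SW by (intro sum_mono) (auto simp: ratio_bounded_def)
  also have "\<dots> = (?m - card S) * (R * ?PS)"
    using fin SW by (simp add: sum_distrib_left card_Diff_subset finite_subset card_mono)
  finally have A: "real (card S) * ?Pc \<le> (?m - card S) * (R * ?PS)" .
  have "\<delta> * ?m * ?Pc \<le> real (card S) * ?Pc"
    using card Pc by (rule mult_right_mono)
  also have "\<dots> \<le> (?m - card S) * (R * ?PS)" by (rule A)
  also have "\<dots> \<le> (?m - \<delta> * ?m) * (R * ?PS)"
    using card R PS by (intro mult_right_mono) auto
  finally have "?m * (\<delta> * ?Pc) \<le> ?m * ((1 - \<delta>) * R * ?PS)"
    by (simp add: algebra_simps)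
  then have "\<delta> * ?Pc \<le> (1 - \<delta>) * R * ?PS"
    using False fin by (simp add: card_gt_0_iff)
  moreover have "sum f W = ?PS + ?Pc"
    using fin SW by (metis add.commute sum.subset_diff)
  ultimately show ?thesis by (simp add: algebra_simps)
qed (use SW in simp)

definition reciprocal_sums :: "('a \<Rightarrow> 'a set) \<Rightarrow> ('a \<Rightarrow> real) \<Rightarrow> 'a \<Rightarrow> real" where
  "reciprocal_sums N f w = 1 / (\<Sum>v\<in>N w. f v)"

lemma reciprocal_sums_pos:
  assumes "finite W" and N: "\<forall>w\<in>W. N w \<subseteq> W \<and> N w \<noteq> {}" and pos: "\<forall>v\<in>W. 0 < f v"
  shows "\<forall>w\<in>W. 0 < reciprocal_sums N f w"
proof
  fix w assume "w \<in> W"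
  then have "0 < (\<Sum>v\<in>N w. f v)"
    using N pos finite_subset[OF _ assms(1)] by (intro sum_pos) auto
  then show "0 < reciprocal_sums N f w" by (simp add: reciprocal_sums_def)
qed

text \<open>R = \<delta> / (2 \<delta> - 1) is the fixed point of R \<mapsto> 1 + R (1 - \<delta>) / \<delta>, the ratio bound that
  sum_ratio_bounded_le gives for sums over neighbourhoods of size at least \<delta> |W|.\<close>
lemma ratio_bounded_reciprocal_sums:
  assumes fin: "finite W" and pos: "\<forall>v\<in>W. 0 < f v" and rat: "ratio_bounded R W f"
    and N: "\<forall>w\<in>W. N w \<subseteq> W \<and> \<delta> * real (card W) \<le> real (card (N w))"
    and \<delta>: "1/2 < \<delta>" and R: "R = \<delta> / (2 * \<delta> - 1)"
  shows "ratio_bounded R W (reciprocal_sums N f)"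
  unfolding ratio_bounded_def
proof (intro ballI)
  fix w w' assume w: "w \<in> W" and w': "w' \<in> W"
  have "0 < real (card W)" using fin w by (auto simp: card_gt_0_iff)
  then have "0 < \<delta> * real (card W)" using \<delta> by simp
  then have ne: "N u \<noteq> {}" if "u \<in> W" for u using N that by fastforce
  have fin_N: "finite (N u)" if "u \<in> W" for u using N that fin finite_subset by blast
  have P: "0 < sum f (N w)" "0 < sum f (N w')"
    using pos N ne fin_N w w' by (auto intro!: sum_pos)
  have "\<delta> * sum f (N w') \<le> \<delta> * sum f W"
    using \<delta> fin N pos w' by (intro mult_left_mono sum_mono2) auto
  also have "\<dots> \<le> (\<delta> + R * (1 - \<delta>)) * sum f (N w)"
    using \<delta> pos N w R by (intro sum_ratio_bounded_le[OF fin _ _ rat]) auto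
  also have "\<delta> + R * (1 - \<delta>) = \<delta> * R"
    using \<delta> R by (simp add: field_simps)
  finally have "sum f (N w') \<le> R * sum f (N w)"
    using \<delta> by (simp add: mult.assoc)
  then show "reciprocal_sums N f w \<le> R * reciprocal_sums N f w'"
    using P by (simp add: reciprocal_sums_def field_simps)
qed

text \<open>The bound \<rho> v \<le> 1 follows from the others; it is stated so that the set is visibly a
  closed subset of a compact box.\<close>
definition balanced_simplex :: "real \<Rightarrow> 'a set \<Rightarrow> ('a \<Rightarrow> real) set" where
  "balanced_simplex R W = {\<rho>. (\<forall>v. v \<notin> W \<longrightarrow> \<rho> v = 0) \<and> (\<forall>v\<in>W. 0 \<le> \<rho> v \<and> \<rho> v \<le> 1)
     \<and> sum \<rho> W = 1 \<and> ratio_bounded R W \<rho>}"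

lemma compact_balanced_simplex: "compact (balanced_simplex R W)"
proof -
  let ?box = "PiE UNIV (\<lambda>v. if v \<in> W then {0..1::real} else {0})"
  have "compactin (product_topology (\<lambda>_. euclidean) UNIV) ?box"
    by (auto simp: compactin_PiE compactin_euclidean_iff)
  then have box: "compact ?box"
    by (simp add: euclidean_product_topology compactin_euclidean_iff)
  have "closed {\<rho>::'a \<Rightarrow> real. sum \<rho> W = 1}"
    by (intro closed_Collect_eq continuous_on_sum continuous_on_const)
       (auto intro: continuous_on_product_coordinates)
  moreover have "closed (\<Inter>p\<in>W \<times> W. {\<rho>::'a \<Rightarrow> real. \<rho> (fst p) \<le> R * \<rho> (snd p)})"
    by (intro closed_INT ballI closed_Collect_le continuous_on_mult continuous_on_const)
       (auto intro: continuous_on_product_coordinates)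
  moreover have "balanced_simplex R W = ?box \<inter> ({\<rho>. sum \<rho> W = 1}
      \<inter> (\<Inter>p\<in>W \<times> W. {\<rho>. \<rho> (fst p) \<le> R * \<rho> (snd p)}))"
    by (auto simp: balanced_simplex_def ratio_bounded_def PiE_def Pi_def split: if_splits)
  ultimately show ?thesis
    using box by (simp add: compact_Int_closed closed_Int)
qed

lemma balanced_simplex_pos:
  assumes "\<rho> \<in> balanced_simplex R W" and "v \<in> W"
  shows "0 < \<rho> v"
proof -
  have "\<exists>v'\<in>W. 0 < \<rho> v'"
  proof (rule ccontr)
    assume "\<not> ?thesis"
    then have "sum \<rho> W \<le> 0" by (intro sum_nonpos) auto
    then show False using assms(1) by (simp add: balanced_simplex_def)
  qed
  then obtain v' where "v' \<in> W" "0 < \<rho> v'" by blast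
  moreover have "\<rho> v' \<le> R * \<rho> v" "0 \<le> \<rho> v"
    using assms \<open>v' \<in> W\<close> by (auto simp: balanced_simplex_def ratio_bounded_def)
  ultimately show ?thesis
    by (metis less_eq_real_def mult_zero_right not_le)
qed

lemma normalised_in_balanced_simplex:
  assumes "finite W" and "W \<noteq> {}" and pos: "\<forall>v\<in>W. 0 < f v" and "ratio_bounded R W f"
  shows "(\<lambda>v. if v \<in> W then f v / sum f W else 0) \<in> balanced_simplex R W"
proof -
  have t: "0 < sum f W" using assms by (intro sum_pos) auto
  have "f v \<le> sum f W" if "v \<in> W" for v
    using that pos assms(1) by (intro member_le_sum) auto
  moreover have "f v / sum f W \<le> R * f v' / sum f W" if "v \<in> W" "v' \<in> W" for v v'
    using that assms(4) t by (intro divide_right_mono) (auto simp: ratio_bounded_def)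
  ultimately show ?thesis
    using t pos by (auto simp: balanced_simplex_def ratio_bounded_def less_imp_le
        simp flip: sum_divide_distrib)
qed

definition scaling_potential :: "'a set \<Rightarrow> ('a \<times> 'a) set \<Rightarrow> ('a \<Rightarrow> real) \<Rightarrow> real" where
  "scaling_potential W F \<rho> = (\<Sum>w\<in>W. ln (\<Sum>v\<in>in_nbrs F w. \<rho> v)) - (\<Sum>v\<in>W. ln (\<rho> v))"

lemma scaling_potential_normalise:
  assumes "finite W" and FW: "F \<subseteq> W \<times> W" and pos: "\<forall>v\<in>W. 0 < f v"
    and nbrs: "\<forall>w\<in>W. in_nbrs F w \<noteq> {}" and t: "0 < t"
  shows "scaling_potential W F (\<lambda>v. if v \<in> W then f v / t else 0) = scaling_potential W F f"
proof -
  note fin_in = finite_in_nbrs[OF assms(1) FW]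
  have "ln (\<Sum>v\<in>in_nbrs F w. if v \<in> W then f v / t else 0) = ln (\<Sum>v\<in>in_nbrs F w. f v) - ln t"
    if "w \<in> W" for w
  proof -
    have "(\<Sum>v\<in>in_nbrs F w. if v \<in> W then f v / t else 0) = (\<Sum>v\<in>in_nbrs F w. f v) / t"
      using subsetD[OF in_nbrs_subset[OF FW]] by (auto simp: sum_divide_distrib intro!: sum.cong)
    moreover have "0 < (\<Sum>v\<in>in_nbrs F w. f v)"
      using that nbrs pos fin_in subsetD[OF in_nbrs_subset[OF FW]] by (intro sum_pos) auto
    ultimately show ?thesis using t by (simp add: ln_div)
  qed
  moreover have "ln (if v \<in> W then f v / t else 0) = ln (f v) - ln t" if "v \<in> W" for v
    using that t pos[rule_format, OF that] by (simp add: ln_div)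
  ultimately show ?thesis
    by (simp add: scaling_potential_def sum_subtractf)
qed

lemma continuous_on_scaling_potential:
  assumes "finite W" and FW: "F \<subseteq> W \<times> W" and nbrs: "\<forall>w\<in>W. in_nbrs F w \<noteq> {}"
  shows "continuous_on (balanced_simplex R W) (scaling_potential W F)"
proof -
  have "(\<Sum>v\<in>in_nbrs F w. \<rho> v) \<noteq> 0" if "\<rho> \<in> balanced_simplex R W" "w \<in> W" for \<rho> w
  proof -
    have "0 < (\<Sum>v\<in>in_nbrs F w. \<rho> v)"
      using that nbrs subsetD[OF in_nbrs_subset[OF FW]] finite_in_nbrs[OF assms(1) FW]
      by (intro sum_pos) (auto intro: balanced_simplex_pos)
    then show ?thesis by simp
  qed
  then show ?thesis
    unfolding scaling_potential_def
    by (intro continuous_on_diff continuous_on_sum continuous_on_ln)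
       (auto intro: continuous_on_subset[OF continuous_on_product_coordinates]
             dest: balanced_simplex_pos simp del: continuous_on_product_coordinates)
qed

lemma scaling_potential_attains_min:
  assumes "finite W" and "W \<noteq> {}" and "F \<subseteq> W \<times> W" and "\<forall>w\<in>W. in_nbrs F w \<noteq> {}" and "1 \<le> R"
  shows "\<exists>\<rho>\<in>balanced_simplex R W. \<forall>y\<in>balanced_simplex R W.
    scaling_potential W F \<rho> \<le> scaling_potential W F y"
proof -
  have "(\<lambda>v. if v \<in> W then 1 / sum (\<lambda>_. 1) W else 0) \<in> balanced_simplex R W"
    using assms by (intro normalised_in_balanced_simplex) (auto simp: ratio_bounded_def)
  then have "balanced_simplex R W \<noteq> {}" by blast
  moreover have "continuous_on (balanced_simplex R W) (scaling_potential W F)"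
    using assms by (intro continuous_on_scaling_potential)
  ultimately show ?thesis
    by (intro continuous_attains_inf compact_balanced_simplex)
qed

lemma sum_ln_nonneg_imp_eq_one:
  assumes fin: "finite W" and pos: "\<forall>v\<in>W. 0 < g v"
    and mass: "(\<Sum>v\<in>W. g v) = real (card W)" and ln: "0 \<le> (\<Sum>v\<in>W. ln (g v))"
  shows "\<forall>v\<in>W. g v = 1"
proof -
  define d where "d v = g v - 1 - ln (g v)" for v
  have d: "\<forall>v\<in>W. 0 \<le> d v" using pos ln_le_minus_one by (simp add: d_def)
  have "sum d W \<le> 0" using mass ln by (simp add: d_def sum_subtractf)
  moreover have "0 \<le> sum d W" using d by (simp add: sum_nonneg)
  ultimately have "\<forall>v\<in>W. d v = 0" using sum_nonneg_eq_0_iff[OF fin] d by auto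
  then show ?thesis using pos ln_eq_minus_one by (simp add: d_def)
qed

text \<open>One Sinkhorn step \<rho> \<mapsto> reciprocal_sums (out_nbrs F) (reciprocal_sums (in_nbrs F) \<rho>) does not
  increase the potential, and leaves it unchanged only at a fixed point.\<close>
lemma scaling_potential_fixed_point:
  assumes fin: "finite W" and FW: "F \<subseteq> W \<times> W" and pos: "\<forall>v\<in>W. 0 < \<rho> v"
    and nbrs: "\<forall>v\<in>W. in_nbrs F v \<noteq> {} \<and> out_nbrs F v \<noteq> {}"
    and le: "scaling_potential W F \<rho>
      \<le> scaling_potential W F (reciprocal_sums (out_nbrs F) (reciprocal_sums (in_nbrs F) \<rho>))"
  shows "\<forall>v\<in>W. \<rho> v * (\<Sum>w\<in>out_nbrs F v. reciprocal_sums (in_nbrs F) \<rho> w) = 1"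
proof -
  define \<sigma> where "\<sigma> = reciprocal_sums (in_nbrs F) \<rho>"
  define \<rho>' where "\<rho>' = reciprocal_sums (out_nbrs F) \<sigma>"
  let ?S = "\<lambda>f w. \<Sum>v\<in>in_nbrs F w. f v" and ?T = "\<lambda>v. \<Sum>w\<in>out_nbrs F v. \<sigma> w"
  note fin_nbrs = finite_in_nbrs[OF fin FW] finite_out_nbrs[OF fin FW]
  have S\<rho>: "\<forall>w\<in>W. 0 < ?S \<rho> w"
    using pos nbrs fin_nbrs subsetD[OF in_nbrs_subset[OF FW]] by (auto intro!: sum_pos)
  have \<sigma>: "\<forall>w\<in>W. 0 < \<sigma> w"
    using S\<rho> by (simp add: \<sigma>_def reciprocal_sums_def)
  have T: "\<forall>v\<in>W. 0 < ?T v"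
    using \<sigma> nbrs fin_nbrs subsetD[OF out_nbrs_subset[OF FW]] by (auto intro!: sum_pos)
  have \<rho>': "\<forall>v\<in>W. 0 < \<rho>' v"
    using T by (simp add: \<rho>'_def reciprocal_sums_def)
  have S\<rho>': "\<forall>w\<in>W. 0 < ?S \<rho>' w"
    using \<rho>' nbrs fin_nbrs subsetD[OF in_nbrs_subset[OF FW]] by (auto intro!: sum_pos)
  have col: "\<forall>w\<in>W. \<sigma> w * ?S \<rho> w = 1"
    using S\<rho> by (auto simp: \<sigma>_def reciprocal_sums_def)
  have row': "\<forall>v\<in>W. \<rho>' v * ?T v = 1"
    using T by (auto simp: \<rho>'_def reciprocal_sums_def)
  have mass: "(\<Sum>v\<in>W. \<rho> v * ?T v) = real (card W)"
    using sum_in_nbrs_swap[OF fin FW, of \<sigma> \<rho>] col by simp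
  have mass': "(\<Sum>w\<in>W. \<sigma> w * ?S \<rho>' w) = real (card W)"
    using sum_in_nbrs_swap[OF fin FW, of \<sigma> \<rho>'] row' by (simp add: mult.commute)
  have "scaling_potential W F \<rho>' - scaling_potential W F \<rho>
      = (\<Sum>w\<in>W. ln (\<sigma> w * ?S \<rho>' w)) + (\<Sum>v\<in>W. ln (\<rho> v * ?T v))"
  proof -
    have "ln (\<sigma> w * ?S \<rho>' w) = ln (?S \<rho>' w) - ln (?S \<rho> w)" if "w \<in> W" for w
      using that S\<rho> S\<rho>' by (auto simp: \<sigma>_def reciprocal_sums_def ln_div ln_mult)
    moreover have "ln (\<rho> v * ?T v) = ln (\<rho> v) - ln (\<rho>' v)" if "v \<in> W" for v
      using that pos T by (auto simp: \<rho>'_def reciprocal_sums_def ln_div ln_mult)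
    ultimately show ?thesis
      by (simp add: scaling_potential_def sum_subtractf)
  qed
  moreover have "(\<Sum>w\<in>W. ln (\<sigma> w * ?S \<rho>' w)) \<le> (\<Sum>w\<in>W. \<sigma> w * ?S \<rho>' w - 1)"
    using \<sigma> S\<rho>' by (intro sum_mono ln_le_minus_one) auto
  ultimately have "0 \<le> (\<Sum>v\<in>W. ln (\<rho> v * ?T v))"
    using le mass' by (simp add: \<rho>'_def \<sigma>_def sum_subtractf)
  then show ?thesis
    using sum_ln_nonneg_imp_eq_one[OF fin _ mass] pos T by (simp add: \<sigma>_def)
qed

lemma perfect_frac_matching_product_weight:
  assumes FW: "F \<subseteq> W \<times> W" and pos: "\<forall>v\<in>W. 0 < \<rho> v \<and> 0 < \<sigma> v"
    and rows: "\<forall>v\<in>W. \<rho> v * (\<Sum>w\<in>out_nbrs F v. \<sigma> w) = 1"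
    and cols: "\<forall>w\<in>W. \<sigma> w * (\<Sum>v\<in>in_nbrs F w. \<rho> v) = 1"
  shows "perfect_frac_matching W F (product_weight F \<rho> \<sigma>)"
proof -
  have "(\<Sum>w\<in>out_nbrs F v. product_weight F \<rho> \<sigma> (v, w)) = \<rho> v * (\<Sum>w\<in>out_nbrs F v. \<sigma> w)" for v
    by (simp add: product_weight_def out_nbrs_def sum_distrib_left)
  moreover have "(\<Sum>v\<in>in_nbrs F w. product_weight F \<rho> \<sigma> (v, w)) = \<sigma> w * (\<Sum>v\<in>in_nbrs F w. \<rho> v)" for w
    by (simp add: product_weight_def in_nbrs_def sum_distrib_left mult.commute)
  moreover have "0 \<le> product_weight F \<rho> \<sigma> e" if "e \<in> F" for e
    using that FW pos by (auto simp: product_weight_def less_imp_le)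
  ultimately show ?thesis
    using rows cols by (simp add: perfect_frac_matching_def product_weight_def)
qed

lemma n_eps_digraph_le_half:
  assumes G: "n_eps_digraph m e W F" and "W \<noteq> {}"
  shows "e \<le> 1/2"
proof -
  obtain v where v: "v \<in> W" using assms(2) by blast
  have fin: "finite W" and FW: "F \<subseteq> W \<times> W" and m: "card W = m"
    using G by (auto simp: n_eps_digraph_def digraph_def)
  have "(1/2 + e) * real m \<le> card (out_nbrs F v)"
    using G v by (simp add: n_eps_digraph_def)
  also have "\<dots> \<le> real m"
    using card_mono[OF fin out_nbrs_subset[OF FW]] m by simp
  finally have "(1/2 + e) * real m \<le> 1 * real m" by simp
  moreover have "0 < real m"
    using v fin m by (auto simp: card_gt_0_iff)
  ultimately show ?thesis
    by (simp add: mult_le_cancel_right_pos)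
qed

lemma n_eps_digraph_reciprocal_sums:
  assumes G: "n_eps_digraph m e W F" and e: "0 < e" and N: "N = in_nbrs F \<or> N = out_nbrs F"
    and pos: "\<forall>v\<in>W. 0 < f v" and rat: "ratio_bounded ((1/2 + e) / (2 * e)) W f"
  shows "\<forall>w\<in>W. 0 < reciprocal_sums N f w"
    and "ratio_bounded ((1/2 + e) / (2 * e)) W (reciprocal_sums N f)"
proof -
  have fin: "finite W" and FW: "F \<subseteq> W \<times> W"
    and deg: "\<forall>v\<in>W. (1/2 + e) * card W \<le> card (out_nbrs F v) \<and> (1/2 + e) * card W \<le> card (in_nbrs F v)"
    using G by (auto simp: n_eps_digraph_def digraph_def)
  have "0 < real (card W)" if "w \<in> W" for w
    using that fin by (auto simp: card_gt_0_iff)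
  then have "0 < (1/2 + e) * card W" if "w \<in> W" for w
    using that e by simp
  then have nbhd: "\<forall>w\<in>W. N w \<subseteq> W \<and> N w \<noteq> {} \<and> (1/2 + e) * card W \<le> card (N w)"
    using N deg subsetD[OF in_nbrs_subset[OF FW]] subsetD[OF out_nbrs_subset[OF FW]] by fastforce
  then show "\<forall>w\<in>W. 0 < reciprocal_sums N f w"
    using pos by (intro reciprocal_sums_pos[OF fin]) auto
  show "ratio_bounded ((1/2 + e) / (2 * e)) W (reciprocal_sums N f)"
    using nbhd pos rat e by (intro ratio_bounded_reciprocal_sums[OF fin]) auto
qed

lemma n_eps_digraph_product_matching:
  assumes G: "n_eps_digraph m e W F" and e: "0 < e" and W: "W \<noteq> {}"
  shows "\<exists>\<rho> \<sigma>. (\<forall>v\<in>W. 0 < \<rho> v \<and> 0 < \<sigma> v) \<and> ratio_bounded ((1/2 + e) / (2 * e)) W \<sigma>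
    \<and> perfect_frac_matching W F (product_weight F \<rho> \<sigma>)"
proof -
  define R where "R = (1/2 + e) / (2 * e)"
  have fin: "finite W" and FW: "F \<subseteq> W \<times> W" and m: "card W = m"
    and deg: "\<forall>v\<in>W. (1/2 + e) * m \<le> card (out_nbrs F v) \<and> (1/2 + e) * m \<le> card (in_nbrs F v)"
    using G by (auto simp: n_eps_digraph_def digraph_def)
  have "0 < real m"
    using W fin m by (auto simp: card_gt_0_iff)
  then have "0 < (1/2 + e) * real m"
    using e by simp
  then have nbrs: "\<forall>v\<in>W. in_nbrs F v \<noteq> {} \<and> out_nbrs F v \<noteq> {}"
    using deg by fastforce
  have R1: "1 \<le> R"
    using n_eps_digraph_le_half[OF G W] e by (simp add: R_def field_simps)
  obtain \<rho> where \<rho>: "\<rho> \<in> balanced_simplex R W"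
    and min: "\<forall>y\<in>balanced_simplex R W. scaling_potential W F \<rho> \<le> scaling_potential W F y"
    using scaling_potential_attains_min[OF fin W FW _ R1] nbrs by blast
  define \<sigma> where "\<sigma> = reciprocal_sums (in_nbrs F) \<rho>"
  define \<rho>' where "\<rho>' = reciprocal_sums (out_nbrs F) \<sigma>"
  have \<rho>_pos: "\<forall>v\<in>W. 0 < \<rho> v"
    using balanced_simplex_pos[OF \<rho>] by blast
  have \<sigma>_pos: "\<forall>w\<in>W. 0 < \<sigma> w" and \<sigma>_ratio: "ratio_bounded R W \<sigma>"
    using n_eps_digraph_reciprocal_sums[OF G e, of "in_nbrs F" \<rho>] \<rho>_pos \<rho>
    by (auto simp: \<sigma>_def R_def balanced_simplex_def)
  then have \<rho>'_pos: "\<forall>v\<in>W. 0 < \<rho>' v" and "ratio_bounded R W \<rho>'"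
    using n_eps_digraph_reciprocal_sums[OF G e, of "out_nbrs F" \<sigma>] by (auto simp: \<rho>'_def R_def)
  then have "(\<lambda>v. if v \<in> W then \<rho>' v / sum \<rho>' W else 0) \<in> balanced_simplex R W"
    using \<rho>'_pos by (intro normalised_in_balanced_simplex[OF fin W])
  moreover have "0 < sum \<rho>' W"
    using \<rho>'_pos fin W by (intro sum_pos) auto
  ultimately have "scaling_potential W F \<rho> \<le> scaling_potential W F \<rho>'"
    using min nbrs \<rho>'_pos scaling_potential_normalise[OF fin FW, of \<rho>' "sum \<rho>' W"] by auto
  then have rows: "\<forall>v\<in>W. \<rho> v * (\<Sum>w\<in>out_nbrs F v. \<sigma> w) = 1"
    using scaling_potential_fixed_point[OF fin FW \<rho>_pos nbrs] by (simp add: \<rho>'_def \<sigma>_def)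
  have "\<forall>w\<in>W. \<sigma> w * (\<Sum>v\<in>in_nbrs F w. \<rho> v) = 1"
    using \<sigma>_pos by (auto simp: \<sigma>_def reciprocal_sums_def)
  then have "perfect_frac_matching W F (product_weight F \<rho> \<sigma>)"
    using perfect_frac_matching_product_weight[OF FW _ rows] \<rho>_pos \<sigma>_pos by blast
  then show ?thesis
    using \<rho>_pos \<sigma>_pos \<sigma>_ratio unfolding R_def by blast
qed

lemma product_matching_pair_bounds:
  assumes G: "n_eps_digraph m e W F" and e: "0 < e" and pos: "\<forall>v\<in>W. 0 < \<rho> v \<and> 0 < \<sigma> v"
    and rat: "ratio_bounded ((1/2 + e) / (2 * e)) W \<sigma>"
    and z: "perfect_frac_matching W F (product_weight F \<rho> \<sigma>)"
    and v: "v \<in> W" and w: "w \<in> W"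
  shows "2 * e / m \<le> \<rho> v * \<sigma> w \<and> \<rho> v * \<sigma> w \<le> 1 / (2 * e * m)"
proof -
  define R where "R = (1/2 + e) / (2 * e)"
  define N where "N = out_nbrs F v"
  have fin: "finite W" and FW: "F \<subseteq> W \<times> W" and m: "card W = m"
    and deg: "(1/2 + e) * m \<le> card N"
    using G v by (auto simp: n_eps_digraph_def digraph_def N_def)
  have NW: "N \<subseteq> W" using out_nbrs_subset[OF FW] by (simp add: N_def)
  have row: "(\<Sum>w'\<in>N. \<rho> v * \<sigma> w') = 1"
    using z v by (simp add: perfect_frac_matching_def product_weight_def N_def out_nbrs_def)
  have "ratio_bounded R W (\<lambda>w. \<rho> v * \<sigma> w)"
    using pos v rat by (intro ratio_bounded_mult_left) (auto simp: R_def)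
  then have upper: "card N * (\<rho> v * \<sigma> w) \<le> R" and lower: "1 \<le> card N * (R * (\<rho> v * \<sigma> w))"
    using ratio_bounded_sum_eq_one[OF NW _ w row] by simp_all
  have p: "0 < \<rho> v * \<sigma> w" using pos v w by simp
  have m0: "0 < real m" using v fin m by (auto simp: card_gt_0_iff)
  have "e \<le> 1/2" using n_eps_digraph_le_half[OF G] v by blast
  have R0: "0 < R" using e by (simp add: R_def)
  have "card N \<le> m" using card_mono[OF fin NW] m by simp
  then have mRp: "1 \<le> m * (R * (\<rho> v * \<sigma> w))"
    using lower p R0 by (smt (verit) mult_right_mono of_nat_mono mult_pos_pos)
  have "2 * e / m \<le> 2 * e / m * (m * (R * (\<rho> v * \<sigma> w)))"
    using mult_left_mono[OF mRp, of "2 * e / m"] e m0 by simp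
  also have "\<dots> = (1/2 + e) * (\<rho> v * \<sigma> w)"
    using e m0 by (simp add: R_def field_simps)
  also have "\<dots> \<le> \<rho> v * \<sigma> w"
    using mult_right_mono[of "1/2 + e" 1 "\<rho> v * \<sigma> w"] \<open>e \<le> 1/2\<close> p by simp
  finally have "2 * e / m \<le> \<rho> v * \<sigma> w" .
  moreover have "(1/2 + e) * m * (\<rho> v * \<sigma> w) \<le> R"
    using upper deg p by (meson mult_right_mono less_imp_le order_trans)
  then have "(1/2 + e) * (m * (\<rho> v * \<sigma> w)) \<le> (1/2 + e) * (1 / (2 * e))"
    by (simp add: R_def mult.assoc)
  then have "m * (\<rho> v * \<sigma> w) \<le> 1 / (2 * e)"
    by (rule mult_left_le_imp_le) (use e in simp)
  then have "\<rho> v * \<sigma> w \<le> 1 / (2 * e * m)"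
    using e m0 by (simp add: field_simps)
  ultimately show ?thesis ..
qed

section \<open>Deleting a small vertex set\<close>

lemma del_vertices_E_subset: "del_vertices_E V E A \<subseteq> (V - A) \<times> (V - A)"
  by (auto simp: del_vertices_E_def)

lemma card_nbrs_le_del_vertices:
  assumes "finite V" and "E \<subseteq> V \<times> V" and "A \<subseteq> V" and "v \<in> V - A"
  shows "card (out_nbrs E v) \<le> card (out_nbrs (del_vertices_E V E A) v) + card A"
    and "card (in_nbrs E v) \<le> card (in_nbrs (del_vertices_E V E A) v) + card A"
proof -
  have fin: "finite (out_nbrs (del_vertices_E V E A) v \<union> A)" "finite (in_nbrs (del_vertices_E V E A) v \<union> A)"
    using assms finite_subset[OF assms(3,1)]
    by (auto intro: finite_subset[OF out_nbrs_subset] finite_subset[OF in_nbrs_subset]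
        simp: del_vertices_E_def)
  have "out_nbrs E v \<subseteq> out_nbrs (del_vertices_E V E A) v \<union> A"
    "in_nbrs E v \<subseteq> in_nbrs (del_vertices_E V E A) v \<union> A"
    using assms by (auto simp: out_nbrs_def in_nbrs_def del_vertices_E_def)
  then show "card (out_nbrs E v) \<le> card (out_nbrs (del_vertices_E V E A) v) + card A"
    and "card (in_nbrs E v) \<le> card (in_nbrs (del_vertices_E V E A) v) + card A"
    using fin by (meson card_Un_le card_mono order_trans)+
qed

lemma n_eps_digraph_del_vertices:
  assumes G: "n_eps_digraph n eps V E" and AV: "A \<subseteq> V"
    and small: "real (card A) \<le> (eps - eps') * n" and eps': "-1/2 \<le> eps'"
  shows "n_eps_digraph (card (V - A)) eps' (V - A) (del_vertices_E V E A)"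
proof -
  have fin: "finite V" and EV: "E \<subseteq> V \<times> V" and loops: "\<forall>v. (v, v) \<notin> E" and n: "card V = n"
    and deg: "\<forall>v\<in>V. (1/2 + eps) * n \<le> card (out_nbrs E v) \<and> (1/2 + eps) * n \<le> card (in_nbrs E v)"
    using G by (auto simp: n_eps_digraph_def digraph_def)
  have "(1/2 + eps') * card (V - A) \<le> (1/2 + eps') * n"
    using eps' card_mono[OF fin, of "V - A"] n by (intro mult_left_mono) auto
  also have "\<dots> \<le> (1/2 + eps) * n - card A"
    using small by (simp add: algebra_simps)
  finally have bound: "(1/2 + eps') * card (V - A) \<le> (1/2 + eps) * n - card A" .
  have "(1/2 + eps') * card (V - A) \<le> card (out_nbrs (del_vertices_E V E A) v)
      \<and> (1/2 + eps') * card (V - A) \<le> card (in_nbrs (del_vertices_E V E A) v)" if "v \<in> V - A" for v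
    using bound deg card_nbrs_le_del_vertices[OF fin EV AV that] that by fastforce
  moreover have "digraph (V - A) (del_vertices_E V E A)"
    using fin loops by (auto simp: digraph_def del_vertices_E_def)
  ultimately show ?thesis
    by (simp add: n_eps_digraph_def)
qed

lemma card_deleted_edges_le:
  assumes "finite V" and "E \<subseteq> V \<times> V" and "A \<subseteq> V"
  shows "card (E - del_vertices_E V E A) \<le> 2 * card A * card V"
proof -
  have "E - del_vertices_E V E A \<subseteq> A \<times> V \<union> V \<times> A"
    using assms by (auto simp: del_vertices_E_def)
  then have "card (E - del_vertices_E V E A) \<le> card (A \<times> V \<union> V \<times> A)"
    using assms by (intro card_mono) (auto intro: finite_subset)
  also have "\<dots> \<le> card (A \<times> V) + card (V \<times> A)"
    by (rule card_Un_le)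
  finally show ?thesis
    by (simp add: card_cartesian_product algebra_simps)
qed

lemma b_normal_mono:
  assumes "b_normal b V E x" and "0 < b" and "b \<le> b'"
  shows "b_normal b' V E x"
proof -
  have "1 / (b' * card V) \<le> 1 / (b * card V)"
    using assms(2,3) by (cases "card V = 0") (auto intro!: divide_left_mono mult_right_mono)
  moreover have "b / card V \<le> b' / card V"
    using assms(3) by (intro divide_right_mono) auto
  ultimately show ?thesis
    using assms(1) unfolding b_normal_def by (meson order_trans)
qed

lemma sum_extend_from_diff:
  fixes f :: "'a \<Rightarrow> real"
  assumes "finite V" and "A \<subseteq> V"
  shows "(\<Sum>v\<in>V. f (if v \<in> V - A then v else v0)) = (\<Sum>v\<in>V - A. f v) + card A * f v0"
proof -
  have "(\<Sum>v\<in>V. f (if v \<in> V - A then v else v0))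
      = (\<Sum>v\<in>V - A. f (if v \<in> V - A then v else v0)) + (\<Sum>v\<in>A. f (if v \<in> V - A then v else v0))"
    by (rule sum.subset_diff[OF assms(2,1)])
  also have "(\<Sum>v\<in>V - A. f (if v \<in> V - A then v else v0)) = (\<Sum>v\<in>V - A. f v)"
    by (rule sum.cong) auto
  also have "(\<Sum>v\<in>A. f (if v \<in> V - A then v else v0)) = card A * f v0"
    by (subst sum.cong[of A A _ "\<lambda>_. f v0"]) auto
  finally show ?thesis .
qed

lemma sum_edges_le_del_vertices:
  fixes g :: "'a \<times> 'a \<Rightarrow> real" and M :: real
  assumes fin: "finite V" and EV: "E \<subseteq> V \<times> V" and AV: "A \<subseteq> V"
    and g: "\<forall>e\<in>E. g e \<le> M" and M: "0 \<le> M"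
  shows "(\<Sum>e\<in>E. g e) \<le> (\<Sum>e\<in>del_vertices_E V E A. g e) + 2 * card A * card V * M"
proof -
  let ?F = "del_vertices_E V E A"
  have "finite E" using fin EV by (meson finite_SigmaI finite_subset)
  then have "(\<Sum>e\<in>E. g e) = (\<Sum>e\<in>?F. g e) + (\<Sum>e\<in>E - ?F. g e)"
    using sum.subset_diff[of ?F E g] by (simp add: del_vertices_E_def add.commute)
  also have "(\<Sum>e\<in>E - ?F. g e) \<le> card (E - ?F) * M"
    using g by (intro sum_bounded_above) auto
  also have "\<dots> \<le> real (2 * card A * card V) * M"
    using card_deleted_edges_le[OF fin EV AV] M by (intro mult_right_mono) (simp_all only: of_nat_le_iff)
  finally show ?thesis by simp
qed

lemma entropy_le_deleted_product:
  fixes l M :: real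
  assumes fin: "finite V" and EV: "E \<subseteq> V \<times> V" and AV: "A \<subseteq> V" and v0: "v0 \<in> V - A"
    and x: "perfect_frac_matching V E x"
    and pos: "\<forall>v\<in>V - A. 0 < \<rho> v \<and> 0 < \<sigma> v"
    and z: "perfect_frac_matching (V - A) (del_vertices_E V E A) (product_weight (del_vertices_E V E A) \<rho> \<sigma>)"
    and bounds: "\<forall>v\<in>V - A. \<forall>w\<in>V - A. l \<le> \<rho> v * \<sigma> w \<and> \<rho> v * \<sigma> w \<le> M" and l: "0 < l"
  shows "entropy E x \<le> entropy (del_vertices_E V E A) (product_weight (del_vertices_E V E A) \<rho> \<sigma>)
           + card A * (log 2 (1 / l) + 2 * card V * M / ln 2)"
proof -
  define W where "W = V - A"
  define F where "F = del_vertices_E V E A"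
  define p where "p v = (if v \<in> W then v else v0)" for v
  have finW: "finite W" and FW: "F \<subseteq> W \<times> W"
    using fin by (auto simp: W_def F_def del_vertices_E_def)
  have pW: "p v \<in> W" for v using v0 by (simp add: p_def W_def)
  have pos_W: "\<forall>v\<in>W. 0 < \<rho> v \<and> 0 < \<sigma> v" using pos by (simp add: W_def)
  have M: "0 \<le> M" using bounds v0 l by force
  have card_V: "card V = card W + card A"
    using AV fin by (simp add: W_def card_Diff_subset card_mono finite_subset)
  have logs: "(\<Sum>v\<in>V. log 2 (\<rho> (p v))) + (\<Sum>v\<in>V. log 2 (\<sigma> (p v)))
      = (\<Sum>v\<in>W. log 2 (\<rho> v)) + (\<Sum>v\<in>W. log 2 (\<sigma> v)) + card A * log 2 (\<rho> v0 * \<sigma> v0)"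
    using sum_extend_from_diff[OF fin AV, of "\<lambda>v. log 2 (\<rho> v)" v0]
      sum_extend_from_diff[OF fin AV, of "\<lambda>v. log 2 (\<sigma> v)" v0] pos v0
    by (simp add: p_def W_def log_mult_pos distrib_left)
  have "l \<le> \<rho> v0 * \<sigma> v0" using bounds v0 by blast
  then have "- log 2 (\<rho> v0 * \<sigma> v0) \<le> log 2 (1 / l)"
    using l by (simp add: log_divide_pos)
  then have loss: "- (card A * log 2 (\<rho> v0 * \<sigma> v0)) \<le> card A * log 2 (1 / l)"
    by (metis minus_mult_right mult_left_mono of_nat_0_le_iff)
  have "0 \<le> card A / ln 2" by simp
  have "(\<Sum>e\<in>F. \<rho> (p (fst e)) * \<sigma> (p (snd e))) = (\<Sum>e\<in>F. product_weight F \<rho> \<sigma> e)"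
    using FW by (intro sum.cong) (auto simp: product_weight_def p_def)
  also have "\<dots> = card W"
    by (rule perfect_frac_matching_sum[OF finW FW z[folded W_def F_def]])
  finally have mass: "(\<Sum>e\<in>E. \<rho> (p (fst e)) * \<sigma> (p (snd e))) \<le> card W + 2 * card A * card V * M"
    using sum_edges_le_del_vertices[OF fin EV AV _ M, of "\<lambda>e. \<rho> (p (fst e)) * \<sigma> (p (snd e))"]
      bounds pW by (simp add: F_def W_def)
  have "entropy E x \<le> - (\<Sum>v\<in>V. log 2 (\<rho> (p v))) - (\<Sum>v\<in>V. log 2 (\<sigma> (p v)))
      + ((\<Sum>e\<in>E. \<rho> (p (fst e)) * \<sigma> (p (snd e))) - card V) / ln 2"
    by (rule entropy_le_product[OF fin EV x]) (use pos_W pW in auto)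
  also have "\<dots> \<le> - (\<Sum>v\<in>W. log 2 (\<rho> v)) - (\<Sum>v\<in>W. log 2 (\<sigma> v)) - card A * log 2 (\<rho> v0 * \<sigma> v0)
      + (card W + 2 * card A * card V * M - card V) / ln 2"
    using logs divide_right_mono[OF diff_right_mono[OF mass, of "card V"], of "ln 2"] by simp
  also have "\<dots> = entropy F (product_weight F \<rho> \<sigma>) - card A * log 2 (\<rho> v0 * \<sigma> v0)
      + card A * (2 * card V * M / ln 2) - card A / ln 2"
    using entropy_product_weight[OF finW FW pos_W z[folded W_def F_def]] card_V
    by (simp add: add_divide_distrib diff_divide_distrib)
  also have "\<dots> \<le> entropy F (product_weight F \<rho> \<sigma>) + card A * (log 2 (1 / l) + 2 * card V * M / ln 2)"
    using loss by (simp add: distrib_left) (use \<open>0 \<le> card A / ln 2\<close> in linarith)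
  finally show ?thesis by (simp add: F_def)
qed

lemma h_digraph_le_deleted_product:
  fixes l M :: real
  assumes G: "n_eps_digraph n eps V E" and eps: "0 < eps" and AV: "A \<subseteq> V" and v0: "v0 \<in> V - A"
    and pos: "\<forall>v\<in>V - A. 0 < \<rho> v \<and> 0 < \<sigma> v"
    and z: "perfect_frac_matching (V - A) (del_vertices_E V E A) (product_weight (del_vertices_E V E A) \<rho> \<sigma>)"
    and bounds: "\<forall>v\<in>V - A. \<forall>w\<in>V - A. l \<le> \<rho> v * \<sigma> w \<and> \<rho> v * \<sigma> w \<le> M" and l: "0 < l"
  shows "h_digraph V E \<le> entropy (del_vertices_E V E A) (product_weight (del_vertices_E V E A) \<rho> \<sigma>)
           + card A * (log 2 (1 / l) + 2 * card V * M / ln 2)"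
proof -
  have "V \<noteq> {}" using v0 by blast
  then have "entropy E ` {x. perfect_frac_matching V E x} \<noteq> {}"
    using n_eps_digraph_product_matching[OF G eps] by blast
  moreover have fin: "finite V" and EV: "E \<subseteq> V \<times> V"
    using G by (auto simp: n_eps_digraph_def digraph_def)
  ultimately show ?thesis
    unfolding h_digraph_def
    using entropy_le_deleted_product[OF fin EV AV v0 _ pos z bounds l] by (intro cSup_least) blast+
qed

lemma deleted_digraph_normal_matching:
  assumes G: "n_eps_digraph n eps V E" and eps: "0 < eps" and AV: "A \<subseteq> V"
    and small: "real (card A) \<le> eps * n / 2" and n: "0 < n"
  shows "\<exists>z. perfect_frac_matching (V - A) (del_vertices_E V E A) z
    \<and> b_normal (1 / eps) (V - A) (del_vertices_E V E A) z
    \<and> h_digraph V E \<le> entropy (del_vertices_E V E A) z + card A * (log 2 (n / eps) + 4 / (eps * ln 2))"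
proof -
  define W where "W = V - A"
  define F where "F = del_vertices_E V E A"
  define m where "m = card W"
  have fin: "finite V" and card_V: "card V = n"
    using G by (auto simp: n_eps_digraph_def digraph_def)
  have "V \<noteq> {}" using n card_V by auto
  then have "eps \<le> 1/2" by (rule n_eps_digraph_le_half[OF G])
  have "card A \<le> n" using card_mono[OF fin AV] card_V by simp
  then have m_eq: "real m = real n - card A"
    using AV fin card_V by (simp add: m_def W_def card_Diff_subset finite_subset of_nat_diff)
  have "eps * n \<le> n" using \<open>eps \<le> 1/2\<close> eps by (intro mult_left_le_one_le) auto
  then have m_ge: "n \<le> 2 * real m" using m_eq small by linarith
  then have m_pos: "0 < real m" using n by linarith
  then have "W \<noteq> {}" by (auto simp: m_def)
  then obtain v0 where v0: "v0 \<in> W" by blast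
  have GA: "n_eps_digraph m (eps / 2) W F"
    using n_eps_digraph_del_vertices[OF G AV, of "eps / 2"] small eps
    by (simp add: W_def F_def m_def)
  obtain \<rho> \<sigma> where pos: "\<forall>v\<in>W. 0 < \<rho> v \<and> 0 < \<sigma> v"
    and ratio: "ratio_bounded ((1/2 + eps / 2) / (2 * (eps / 2))) W \<sigma>"
    and z: "perfect_frac_matching W F (product_weight F \<rho> \<sigma>)"
    using n_eps_digraph_product_matching[OF GA _ \<open>W \<noteq> {}\<close>] eps by auto
  have bounds: "\<forall>v\<in>W. \<forall>w\<in>W. eps / m \<le> \<rho> v * \<sigma> w \<and> \<rho> v * \<sigma> w \<le> 1 / (eps * m)"
    using product_matching_pair_bounds[OF GA _ pos ratio z] eps by auto
  have "b_normal (1 / eps) W F (product_weight F \<rho> \<sigma>)"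
    using bounds subsetD[OF del_vertices_E_subset[of V E A]]
    by (fastforce simp: b_normal_def product_weight_def m_def W_def F_def)
  moreover have "h_digraph V E \<le> entropy F (product_weight F \<rho> \<sigma>)
      + card A * (log 2 (1 / (eps / m)) + 2 * n * (1 / (eps * m)) / ln 2)"
    using h_digraph_le_deleted_product[OF G eps AV, of v0 \<rho> \<sigma> "eps / m" "1 / (eps * m)"]
      v0 pos z bounds m_pos eps card_V by (simp add: W_def F_def)
  moreover have "log 2 (1 / (eps / m)) \<le> log 2 (n / eps)"
    using m_pos eps m_eq by (simp add: divide_right_mono)
  moreover have "2 * n * (1 / (eps * m)) / ln 2 \<le> 4 / (eps * ln 2)"
    using m_ge m_pos eps by (simp add: field_simps)
  ultimately have "b_normal (1 / eps) W F (product_weight F \<rho> \<sigma>)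
      \<and> h_digraph V E \<le> entropy F (product_weight F \<rho> \<sigma>) + card A * (log 2 (n / eps) + 4 / (eps * ln 2))"
    by (smt (verit) mult_left_mono of_nat_0_le_iff)
  then show ?thesis
    using z unfolding W_def F_def by blast
qed

lemma eventually_small_log_squared:
  fixes C eps :: real
  assumes "0 < eps"
  shows "\<forall>\<^sub>F n in sequentially. 0 < n \<and> (\<forall>a. 0 \<le> a \<and> a \<le> real n / (log 2 (real n))\<^sup>2
    \<longrightarrow> a \<le> eps * n / 2 \<and> a * (C + log 2 n) \<le> eps * n / 2)"
proof -
  have "((\<lambda>n::nat. 1 / (log 2 (real n))\<^sup>2) \<longlongrightarrow> 0) sequentially"
    "((\<lambda>n::nat. (C + log 2 (real n)) / (log 2 (real n))\<^sup>2) \<longlongrightarrow> 0) sequentially"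
    "filterlim (\<lambda>n::nat. C + log 2 (real n)) at_top sequentially"
    by real_asymp+
  then have "\<forall>\<^sub>F n in sequentially. 1 / (log 2 (real n))\<^sup>2 < eps / 2
      \<and> (C + log 2 (real n)) / (log 2 (real n))\<^sup>2 < eps / 2 \<and> 0 \<le> C + log 2 (real n) \<and> 0 < n"
    using assms by (intro eventually_conj order_tendstoD(2) eventually_ge_at_top)
      (auto simp: filterlim_at_top eventually_gt_at_top)
  then show ?thesis
  proof (rule eventually_mono)
    fix n :: nat
    let ?L = "log 2 (real n)"
    assume n: "1 / ?L\<^sup>2 < eps / 2 \<and> (C + ?L) / ?L\<^sup>2 < eps / 2 \<and> 0 \<le> C + ?L \<and> 0 < n"
    have "a \<le> eps * n / 2 \<and> a * (C + ?L) \<le> eps * n / 2" if a: "0 \<le> a \<and> a \<le> real n / ?L\<^sup>2" for a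
    proof
      have "a \<le> real n * (1 / ?L\<^sup>2)" using a by simp
      also have "\<dots> \<le> real n * (eps / 2)" using n by (intro mult_left_mono) auto
      finally show "a \<le> eps * n / 2" by (simp add: mult.commute)
      have "a * (C + ?L) \<le> real n / ?L\<^sup>2 * (C + ?L)" using a n by (intro mult_right_mono) auto
      also have "\<dots> = real n * ((C + ?L) / ?L\<^sup>2)" by simp
      also have "\<dots> \<le> real n * (eps / 2)" using n by (intro mult_left_mono) auto
      finally show "a * (C + ?L) \<le> eps * n / 2" by (simp add: mult.commute)
    qed
    with n show "0 < n \<and> (\<forall>a. 0 \<le> a \<and> a \<le> real n / ?L\<^sup>2 \<longrightarrow> a \<le> eps * n / 2 \<and> a * (C + ?L) \<le> eps * n / 2)"
      by blast
  qed
qed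

lemma normal_matching_after_small_deletion:
  fixes eps b :: real
  assumes eps: "0 < eps" and b: "1 / eps \<le> b"
  shows "\<exists>n0. \<forall>n\<ge>n0. \<forall>(V::'a set) E A.
    n_eps_digraph n eps V E \<and> A \<subseteq> V \<and> real (card A) \<le> real n / (log 2 (real n))\<^sup>2 \<longrightarrow>
      (\<exists>z. perfect_frac_matching (V - A) (del_vertices_E V E A) z \<and>
           b_normal b (V - A) (del_vertices_E V E A) z \<and>
           entropy (del_vertices_E V E A) z \<ge> h_digraph V E - eps * real n)"
proof -
  define C where "C = log 2 (1 / eps) + 4 / (eps * ln 2)"
  obtain n0 where n0: "\<forall>n\<ge>n0. 0 < n \<and> (\<forall>a. 0 \<le> a \<and> a \<le> real n / (log 2 (real n))\<^sup>2
      \<longrightarrow> a \<le> eps * n / 2 \<and> a * (C + log 2 n) \<le> eps * n / 2)"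
    using eventually_small_log_squared[OF eps, of C] by (auto simp: eventually_sequentially)
  have "\<exists>z. perfect_frac_matching (V - A) (del_vertices_E V E A) z \<and>
           b_normal b (V - A) (del_vertices_E V E A) z \<and>
           entropy (del_vertices_E V E A) z \<ge> h_digraph V E - eps * real n"
    if n: "n0 \<le> n" and G: "n_eps_digraph n eps V E" and AV: "A \<subseteq> V"
      and A: "real (card A) \<le> real n / (log 2 (real n))\<^sup>2" for n and V :: "'a set" and E A
  proof -
    have "0 < n" and small: "card A \<le> eps * n / 2" and loss: "card A * (C + log 2 n) \<le> eps * n / 2"
      using n0 n A by auto
    then obtain z where z: "perfect_frac_matching (V - A) (del_vertices_E V E A) z"
      and normal: "b_normal (1 / eps) (V - A) (del_vertices_E V E A) z"
      and h: "h_digraph V E \<le> entropy (del_vertices_E V E A) z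
          + card A * (log 2 (n / eps) + 4 / (eps * ln 2))"
      using deleted_digraph_normal_matching[OF G eps AV] by blast
    have "log 2 (n / eps) + 4 / (eps * ln 2) = C + log 2 n"
      using eps \<open>0 < n\<close> by (simp add: C_def log_divide)
    moreover have "0 \<le> eps * n" using eps by simp
    ultimately have "h_digraph V E - eps * n \<le> entropy (del_vertices_E V E A) z"
      using h loss by simp
    then show ?thesis
      using z b_normal_mono[OF normal _ b] eps by auto
  qed
  then show ?thesis by blast
qed

theorem lemma4p6:
  "\<forall>eps::real. 0 < eps \<and> eps \<le> 1 \<longrightarrow>
    (\<exists>b0::real. \<forall>b\<ge>b0. \<exists>n0::nat. \<forall>n\<ge>n0.
      \<forall>(V::nat set) (E::(nat \<times> nat) set) (A::nat set).
        n_eps_digraph n eps V E \<and> A \<subseteq> V \<and>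
        real (card A) \<le> real n / (log 2 (real n))^2 \<longrightarrow>
        (\<exists>z. perfect_frac_matching (V - A) (del_vertices_E V E A) z \<and>
             b_normal b (V - A) (del_vertices_E V E A) z \<and>
             entropy (del_vertices_E V E A) z \<ge> h_digraph V E - eps * real n))"
  using normal_matching_after_small_deletion by blast

end
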